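(* Let $1<\theta<e^3$ with $\log\theta$ irrational, and let $a_k,B_k,\lambda_k$ be associated to the simple continued fraction of $2/\log\theta$. For each $n\in\mathcal A_\theta$ there exist positive integers $c,k$ such that $n=cB_{2k-1}$ and $\lambda_{2k}>\frac{6c^2}{\log\theta}$.
   Context: $\log$ is the natural logarithm; $M'_\theta(n)=\left\lfloor 1/(\theta^{1/n}-1)\right\rfloor$ and $\mathcal A_\theta=\{n\in\mathbb N: M'_\theta(n)\neq \lfloor n/\log\theta-1/2\rfloor\}$. For an irrational $\alpha=[a_0;a_1,a_2,\dots]$ (simple continued fraction, $a_0\in\mathbb Z$, $a_k\ge1$ for $k\ge1$), $A_k/B_k=[a_0;a_1,\dots,a_k]$ is the $k$th convergent in lowest terms with $B_k>0$, and $\lambda_k=[0;a_{k-1},a_{k-2},\dots,a_1]+[a_k;a_{k+1},a_{k+2},\dots]$. *)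

theory Defs
  imports Complex_Main
begin

text \<open>Complete quotients of the simple continued fraction of a real alpha:
  alpha_0 = alpha, alpha_(k+1) = 1 / frac(alpha_k).  For irrational alpha these are
  exactly the tails [a_k; a_(k+1), ...].\<close>
fun cf_rest :: "real \<Rightarrow> nat \<Rightarrow> real" where
  "cf_rest x 0 = x"
| "cf_rest x (Suc k) = 1 / frac (cf_rest x k)"

definition cf_a :: "real \<Rightarrow> nat \<Rightarrow> int" where
  "cf_a x k = \<lfloor>cf_rest x k\<rfloor>"

fun cf_val :: "int list \<Rightarrow> 'a::field" where
  "cf_val [] = 0"
| "cf_val [x] = of_int x"
| "cf_val (x # y # ys) = of_int x + 1 / cf_val (y # ys)"

definition cf_B :: "real \<Rightarrow> nat \<Rightarrow> int" where
  "cf_B x k = snd (quotient_of (cf_val (map (cf_a x) [0..<Suc k]) :: rat))"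

definition cf_lambda :: "real \<Rightarrow> nat \<Rightarrow> real" where
  "cf_lambda x k = cf_val (0 # map (cf_a x) (rev [1..<k])) + cf_rest x k"

definition M' :: "real \<Rightarrow> nat \<Rightarrow> int" where
  "M' \<theta> n = \<lfloor>1 / (\<theta> powr (1 / real n) - 1)\<rfloor>"

definition A_set :: "real \<Rightarrow> nat set" where
  "A_set \<theta> = {n. n \<ge> 1 \<and> M' \<theta> n \<noteq> \<lfloor>real n / ln \<theta> - 1/2\<rfloor>}"

end

theory Submission
  imports Defs
begin

(* Put L = ln theta and alpha = 2/L.  The Laurent expansion
   1/(e^x - 1) = 1/x - 1/2 + x/12 - ... gives, for x = L/n,
     n/L - 1/2 < 1/(theta^(1/n) - 1) < n/L - 1/2 + L/(12 n),
   so if the two floors in the definition of A_theta differ, some integer f lies in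
   (n/L - 1/2, n/L - 1/2 + L/(12 n)); then p = 2f + 1 satisfies
     0 < p - n alpha < L/(6 n).
   Cancelling c = gcd(p, n) gives a reduced fraction p'/q' with
   0 < p' - q' alpha < L/(6 c^2 q') <= 1/(2 q'), so by Legendre's theorem p'/q' is a
   convergent A_j/B_j; the sign of the error forces j to be odd, and the classical
   identity |B_j alpha - A_j| = 1/(B_j lambda_(j+1)) turns the error bound into
   lambda_(j+1) > 6 c^2 / L. *)

section \<open>Continuants and finite continued fractions\<close>

text \<open>Continuants of a sequence b, shifted by two so that they start at index 0:
  cont_num b (k+2) / cont_den b (k+2) is the convergent [b 0; b 1, ..., b k].\<close>
fun cont_num :: "(nat \<Rightarrow> int) \<Rightarrow> nat \<Rightarrow> int" where
  "cont_num b 0 = 0"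
| "cont_num b (Suc 0) = 1"
| "cont_num b (Suc (Suc n)) = b n * cont_num b (Suc n) + cont_num b n"

fun cont_den :: "(nat \<Rightarrow> int) \<Rightarrow> nat \<Rightarrow> int" where
  "cont_den b 0 = 1"
| "cont_den b (Suc 0) = 0"
| "cont_den b (Suc (Suc n)) = b n * cont_den b (Suc n) + cont_den b n"

text \<open>A finite continued fraction with arbitrary entries in a field; unlike cf_val it
  allows a non-integral last entry, which is needed to express a number through its
  complete quotients.\<close>
fun cf_field :: "'a::field list \<Rightarrow> 'a" where
  "cf_field [] = 0"
| "cf_field [x] = x"
| "cf_field (x # y # ys) = x + 1 / cf_field (y # ys)"

lemma cf_val_eq_cf_field: "(cf_val l :: 'a::field) = cf_field (map of_int l)"
  by (induction l rule: cf_val.induct) auto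

lemma cf_field_Cons: "ys \<noteq> [] \<Longrightarrow> cf_field (z # ys) = z + 1 / cf_field ys"
  by (cases ys) auto

lemma cf_field_merge_last: "cf_field (xs @ [x, y]) = cf_field (xs @ [x + 1 / y])"
  by (induction xs) (simp_all add: cf_field_Cons)

lemma cont_det: "cont_num b (Suc n) * cont_den b n - cont_num b n * cont_den b (Suc n) = (-1) ^ n"
  by (induction n) (simp_all add: algebra_simps)

lemma coprime_cont: "coprime (cont_num b n) (cont_den b n)"
proof (cases n)
  case (Suc m)
  define g where "g = gcd (cont_num b (Suc m)) (cont_den b (Suc m))"
  have "g dvd cont_num b (Suc m) * cont_den b m - cont_num b m * cont_den b (Suc m)"
    unfolding g_def by (rule dvd_diff[OF dvd_mult2[OF gcd_dvd1] dvd_mult[OF gcd_dvd2]])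
  then have "g dvd (-1) ^ m" by (simp only: cont_det)
  then have "is_unit g" by (rule dvd_unit_imp_unit) simp
  then show ?thesis unfolding g_def Suc by (simp add: coprime_iff_gcd_eq_1)
qed simp

lemma reduced_denominator_unique:
  fixes a b c d :: int
  assumes "coprime a b" "b > 0" "coprime c d" "d > 0" "a * d = c * b"
  shows "b = d"
proof -
  have "b dvd a * d" using assms(5) by simp
  then have "b dvd d" using assms(1) by (metis coprime_commute coprime_dvd_mult_right_iff)
  moreover have "d dvd c * b" using assms(5) by (metis dvd_triv_right)
  then have "d dvd b" using assms(3) by (metis coprime_commute coprime_dvd_mult_right_iff)
  ultimately show ?thesis using assms(2,4) by (simp add: zdvd_antisym_nonneg)
qed

text \<open>Consecutive continuant vectors form a basis of Z^2 (their determinant is +-1), so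
  every integer pair has integer coordinates with respect to them.\<close>
lemma cont_coordinates:
  "\<exists>u v. p = u * cont_num b (Suc n) + v * cont_num b (Suc (Suc n))
       \<and> q = u * cont_den b (Suc n) + v * cont_den b (Suc (Suc n))"
proof -
  define P where "P = cont_num b (Suc n)"
  define Q where "Q = cont_den b (Suc n)"
  define P1 where "P1 = cont_num b (Suc (Suc n))"
  define Q1 where "Q1 = cont_den b (Suc (Suc n))"
  define \<Delta> where "\<Delta> = P * Q1 - P1 * Q"
  have "\<Delta> = - ((-1) ^ Suc n)"
    using cont_det[of b "Suc n"] unfolding \<Delta>_def P_def Q_def P1_def Q1_def by simp
  then have unimod: "\<Delta> * \<Delta> = 1" by (simp flip: power_add)
  define u where "u = (p * Q1 - q * P1) * \<Delta>"
  define v where "v = (P * q - Q * p) * \<Delta>"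
  have "u * P + v * P1 = (\<Delta> * \<Delta>) * p" "u * Q + v * Q1 = (\<Delta> * \<Delta>) * q"
    unfolding u_def v_def \<Delta>_def by (simp_all add: algebra_simps)
  then show ?thesis using unimod unfolding P_def Q_def P1_def Q1_def by auto
qed

lemma coordinate_signs:
  fixes u v q Q Q1 :: int
  assumes q: "q = u * Q + v * Q1" "0 < q" "q < Q1" and Q: "Q \<ge> 1" "Q1 \<ge> 1"
  shows "u \<noteq> 0 \<and> u * v \<le> 0"
proof (intro conjI notI)
  assume "u = 0"
  then have "q = v * Q1" using q by simp
  then show False
    using q Q mult_right_mono[of 1 v Q1] mult_nonpos_nonneg[of v Q1] by (cases "v \<le> 0") auto
next
  show "u * v \<le> 0"
  proof (rule ccontr)
    assume "\<not> u * v \<le> 0"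
    then have "(u > 0 \<and> v > 0) \<or> (u < 0 \<and> v < 0)" by (metis not_le zero_less_mult_iff)
    then show False
    proof
      assume "u > 0 \<and> v > 0"
      then have "u * Q \<ge> 0" "v * Q1 \<ge> 1 * Q1" using Q by (auto intro: mult_right_mono)
      then show False using q by simp
    next
      assume "u < 0 \<and> v < 0"
      then have "u * Q < 0" "v * Q1 < 0" using Q by (auto simp: mult_neg_pos)
      then show False using q by simp
    qed
  qed
qed

lemma abs_le_abs_add_same_sign: "0 \<le> (a::real) * b \<Longrightarrow> \<bar>a\<bar> \<le> \<bar>a + b\<bar>"
  by (cases "a \<ge> 0"; cases "b \<ge> 0") (auto simp: zero_le_mult_iff)

declare cont_num.simps(3)[simp del] cont_den.simps(3)[simp del]

lemma cf_field_cont: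
  fixes t :: "'a::linordered_field"
  assumes pos: "\<And>i. i > 0 \<Longrightarrow> b i \<ge> 1" and t: "t > 0 \<or> k = 0"
  shows "cf_field (map (of_int \<circ> b) [0..<k] @ [t])
     = (t * of_int (cont_num b (Suc k)) + of_int (cont_num b k))
       / (t * of_int (cont_den b (Suc k)) + of_int (cont_den b k))"
  using t
proof (induction k arbitrary: t)
  case 0
  then show ?case by simp
next
  case (Suc k)
  then have t: "t > 0" by simp
  define t' where "t' = of_int (b k) + 1 / t"
  have t': "t' > 0 \<or> k = 0"
  proof (cases "k = 0")
    case False
    then have "(of_int (b k) :: 'a) \<ge> 1" using pos by simp
    moreover have "1 / t > 0" using t by simp
    ultimately show ?thesis unfolding t'_def by linarith
  qed simp
  have step: "\<And>X Y. t' * X + Y = (t * (of_int (b k) * X + Y) + X) / t"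
    using t unfolding t'_def by (simp add: field_simps)
  have cancel: "\<And>X Y. (X / t) / (Y / t) = X / Y"
    using t by simp
  have "cf_field (map (of_int \<circ> b) [0..<Suc k] @ [t])
      = cf_field (map (of_int \<circ> b) [0..<k] @ [of_int (b k), t])" by simp
  also have "\<dots> = cf_field (map (of_int \<circ> b) [0..<k] @ [t'])"
    unfolding t'_def by (rule cf_field_merge_last)
  also have "\<dots> = (t' * of_int (cont_num b (Suc k)) + of_int (cont_num b k))
                  / (t' * of_int (cont_den b (Suc k)) + of_int (cont_den b k))"
    using Suc.IH t' by blast
  also have "\<dots> = (t * of_int (cont_num b (Suc (Suc k))) + of_int (cont_num b (Suc k)))
                  / (t * of_int (cont_den b (Suc (Suc k))) + of_int (cont_den b (Suc k)))"
    by (simp only: step cancel cont_num.simps(3) cont_den.simps(3) of_int_add of_int_mult)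
  finally show ?case .
qed

text \<open>With positive partial quotients the denominators are positive and grow at least
  linearly; the latter guarantees that every positive integer is bracketed by two
  consecutive denominators.\<close>
lemma cont_den_pos:
  assumes pos: "\<And>i. i > 0 \<Longrightarrow> b i \<ge> 1"
  shows "cont_den b (Suc (Suc n)) \<ge> 1 \<and> cont_den b (Suc n) \<ge> 0"
proof (induction n)
  case 0
  then show ?case by (simp add: cont_den.simps(3))
next
  case (Suc n)
  have "b (Suc n) * cont_den b (Suc (Suc n)) \<ge> 1 * 1"
    using pos[of "Suc n"] Suc by (intro mult_mono) auto
  then show ?case using Suc cont_den.simps(3)[of b "Suc n"] by simp
qed

lemma cont_den_grow:
  assumes pos: "\<And>i. i > 0 \<Longrightarrow> b i \<ge> 1"
  shows "cont_den b (Suc (Suc (Suc n))) \<ge> int n + 1"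
proof (induction n)
  case 0
  then show ?case using pos[of 1] by (simp add: cont_den.simps(3))
next
  case (Suc n)
  have "b (Suc (Suc n)) * cont_den b (Suc (Suc (Suc n))) \<ge> 1 * cont_den b (Suc (Suc (Suc n)))"
    using pos[of "Suc (Suc n)"] cont_den_pos[where b=b and n="Suc n", OF pos] by (intro mult_right_mono) auto
  then show ?case
    using Suc.IH cont_den_pos[where b=b and n=n, OF pos] cont_den.simps(3)[of b "Suc (Suc n)"] by linarith
qed

section \<open>The continued fraction expansion of an irrational number\<close>

lemma cf_rest_irrational: "x \<notin> \<rat> \<Longrightarrow> cf_rest x k \<notin> \<rat>"
proof (induction k)
  case (Suc k)
  show ?case
  proof
    assume "cf_rest x (Suc k) \<in> \<rat>"
    then have "1 / cf_rest x (Suc k) \<in> \<rat>" by (rule Rats_divide[OF Rats_1])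
    then have "frac (cf_rest x k) + of_int \<lfloor>cf_rest x k\<rfloor> \<in> \<rat>" by (intro Rats_add) auto
    then show False using Suc by (simp add: frac_def)
  qed
qed simp

lemma cf_rest_gt_1:
  assumes x: "x \<notin> \<rat>" and k: "0 < k"
  shows "cf_rest x k > 1"
proof -
  obtain m where m: "k = Suc m" using k by (cases k) auto
  have "cf_rest x m \<notin> \<int>" using cf_rest_irrational[OF x] Ints_subset_Rats by blast
  then have "0 < frac (cf_rest x m)" "frac (cf_rest x m) < 1"
    using frac_eq_0_iff[of "cf_rest x m"] frac_ge_0[of "cf_rest x m"] frac_lt_1 by auto
  then show ?thesis unfolding m by simp
qed

lemma cf_a_pos: "x \<notin> \<rat> \<Longrightarrow> 0 < k \<Longrightarrow> cf_a x k \<ge> 1"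
  using cf_rest_gt_1[of x k] unfolding cf_a_def by linarith

declare cf_rest.simps(2)[simp del]

lemma cf_field_expansion: "cf_field (map (of_int \<circ> cf_a x) [0..<k] @ [cf_rest x k]) = x"
proof (induction k)
  case (Suc k)
  have "cf_field (map (of_int \<circ> cf_a x) [0..<Suc k] @ [cf_rest x (Suc k)])
      = cf_field (map (of_int \<circ> cf_a x) [0..<k] @ [of_int (cf_a x k), cf_rest x (Suc k)])"
    by simp
  also have "\<dots> = cf_field (map (of_int \<circ> cf_a x) [0..<k] @ [of_int (cf_a x k) + 1 / cf_rest x (Suc k)])"
    by (rule cf_field_merge_last)
  also have "of_int (cf_a x k) + 1 / cf_rest x (Suc k) = cf_rest x k"
    by (simp add: cf_a_def frac_def cf_rest.simps(2))
  finally show ?case using Suc.IH by simp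
qed simp

context
  fixes x :: real
  assumes x: "x \<notin> \<rat>"
begin

lemma partial_quotients_pos: "0 < i \<Longrightarrow> 1 \<le> cf_a x i"
  by (rule cf_a_pos[OF x])

lemma cont_den_ge_1: "cont_den (cf_a x) (Suc (Suc k)) \<ge> 1"
  using cont_den_pos[of "cf_a x" k, OF partial_quotients_pos] by blast

lemma cont_den_nonneg: "cont_den (cf_a x) (Suc k) \<ge> 0"
  using cont_den_pos[of "cf_a x" k, OF partial_quotients_pos] by blast

lemma cf_rest_formula:
  "x = (cf_rest x k * of_int (cont_num (cf_a x) (Suc k)) + of_int (cont_num (cf_a x) k)) /
       (cf_rest x k * of_int (cont_den (cf_a x) (Suc k)) + of_int (cont_den (cf_a x) k))"
proof -
  have "0 < cf_rest x k \<or> k = 0" using cf_rest_gt_1[OF x, of k] by (cases k) auto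
  then show ?thesis
    using cf_field_cont[where b="cf_a x" and t="cf_rest x k" and k=k, OF partial_quotients_pos]
      cf_field_expansion[of x k] by simp
qed

lemma convergent_eq:
  "(cf_val (map (cf_a x) [0..<Suc k]) :: 'a::linordered_field)
     = of_int (cont_num (cf_a x) (Suc (Suc k))) / of_int (cont_den (cf_a x) (Suc (Suc k)))"
proof -
  have "(cf_val (map (cf_a x) [0..<Suc k]) :: 'a)
      = cf_field (map (of_int \<circ> cf_a x) [0..<k] @ [of_int (cf_a x k)])"
    by (simp add: cf_val_eq_cf_field)
  also have "\<dots> = (of_int (cf_a x k) * of_int (cont_num (cf_a x) (Suc k)) + of_int (cont_num (cf_a x) k)) /
             (of_int (cf_a x k) * of_int (cont_den (cf_a x) (Suc k)) + of_int (cont_den (cf_a x) k))"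
  proof (rule cf_field_cont[where b="cf_a x", OF partial_quotients_pos])
    show "0 < (of_int (cf_a x k) :: 'a) \<or> k = 0"
      using cf_a_pos[OF x, of k] by (cases "k = 0") auto
  qed
  also have "\<dots> = of_int (cont_num (cf_a x) (Suc (Suc k))) / of_int (cont_den (cf_a x) (Suc (Suc k)))"
    by (simp add: cont_num.simps(3) cont_den.simps(3))
  finally show ?thesis .
qed

lemma cf_B_eq_cont_den: "cf_B x k = cont_den (cf_a x) (Suc (Suc k))"
proof -
  obtain a b where ab: "quotient_of (cf_val (map (cf_a x) [0..<Suc k]) :: rat) = (a, b)"
    by (cases "quotient_of (cf_val (map (cf_a x) [0..<Suc k]) :: rat)") auto
  define P where "P = cont_num (cf_a x) (Suc (Suc k))"
  define Q where "Q = cont_den (cf_a x) (Suc (Suc k))"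
  have Q: "Q > 0" using cont_den_ge_1[of k] unfolding Q_def by linarith
  have b: "b > 0" using quotient_of_denom_pos[OF ab] .
  have "(of_int a / of_int b :: rat) = of_int P / of_int Q"
    using quotient_of_div[OF ab] convergent_eq[of k, where 'a=rat] unfolding P_def Q_def by simp
  then have "(of_int (a * Q) :: rat) = of_int (P * b)"
    using Q b by (simp add: field_simps)
  then have "a * Q = P * b" by (simp only: of_int_eq_iff)
  then have "b = Q"
    using reduced_denominator_unique[OF quotient_of_coprime[OF ab] b
        coprime_cont[of "cf_a x" "Suc (Suc k)", folded P_def Q_def] Q]
    by simp
  then show ?thesis unfolding cf_B_def ab Q_def by simp
qed

text \<open>The denominator of the error of the j-th convergent:
  B_j x - A_j = (-1)^j / err_den x j, with err_den x j = alpha_(j+1) B_j + B_(j-1).\<close>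
definition err_den :: "real \<Rightarrow> nat \<Rightarrow> real" where
  "err_den y j = cf_rest y (Suc j) * of_int (cont_den (cf_a y) (Suc (Suc j)))
                 + of_int (cont_den (cf_a y) (Suc j))"

lemma err_den_pos: "err_den x j > 0"
proof -
  have "cf_rest x (Suc j) * of_int (cont_den (cf_a x) (Suc (Suc j))) > 0"
    using cf_rest_gt_1[OF x, of "Suc j"] cont_den_ge_1[of j] by simp
  then show ?thesis using cont_den_nonneg[of j] unfolding err_den_def by linarith
qed

lemma convergent_error:
  "of_int (cont_den (cf_a x) (Suc (Suc j))) * x - of_int (cont_num (cf_a x) (Suc (Suc j)))
     = (-1) ^ j / err_den x j"
proof -
  define r where "r = cf_rest x (Suc j)"
  define P where "P = real_of_int (cont_num (cf_a x) (Suc (Suc j)))"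
  define Q where "Q = real_of_int (cont_den (cf_a x) (Suc (Suc j)))"
  define P' where "P' = real_of_int (cont_num (cf_a x) (Suc j))"
  define Q' where "Q' = real_of_int (cont_den (cf_a x) (Suc j))"
  have D: "err_den x j = r * Q + Q'" unfolding err_den_def r_def Q_def Q'_def by simp
  have xe: "x = (r * P + P') / (r * Q + Q')"
    using cf_rest_formula[of "Suc j"] unfolding r_def P_def Q_def P'_def Q'_def by simp
  have det: "P * Q' - P' * Q = - ((-1) ^ j)"
    using arg_cong[OF cont_det[of "cf_a x" "Suc j"], of real_of_int]
    unfolding P_def Q_def P'_def Q'_def by simp
  have pos: "r * Q + Q' > 0" using err_den_pos[of j] unfolding D .
  have "Q * x - P = - (P * Q' - P' * Q) / (r * Q + Q')"
    using pos unfolding xe by (simp add: field_simps)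
  also have "\<dots> = (-1) ^ j / err_den x j" unfolding det D by simp
  finally show ?thesis unfolding P_def Q_def .
qed

text \<open>lambda_(j+1) = err_den x j / B_j; hence |B_j x - A_j| = 1 / (B_j lambda_(j+1)).\<close>
lemma cf_lambda_reversed_part:
  "(cf_val (0 # map (cf_a x) (rev [1..<Suc j])) :: real)
     = of_int (cont_den (cf_a x) (Suc j)) / of_int (cont_den (cf_a x) (Suc (Suc j)))"
proof (induction j)
  case 0
  then show ?case by (simp add: cont_den.simps(3))
next
  case (Suc j)
  have cons0: "\<And>c L. (cf_val (c # L) :: real) = of_int c + cf_val (0 # L)"
    by (case_tac L) auto
  have Q: "real_of_int (cont_den (cf_a x) (Suc (Suc j))) \<ge> 1" using cont_den_ge_1[of j] by simp
  have "(cf_val (0 # map (cf_a x) (rev [1..<Suc (Suc j)])) :: real)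
      = 1 / cf_val (cf_a x (Suc j) # map (cf_a x) (rev [1..<Suc j]))"
    by simp
  also have "\<dots> = 1 / (of_int (cf_a x (Suc j))
                 + of_int (cont_den (cf_a x) (Suc j)) / of_int (cont_den (cf_a x) (Suc (Suc j))))"
    by (simp only: cons0[of "cf_a x (Suc j)"] Suc.IH)
  also have "\<dots> = of_int (cont_den (cf_a x) (Suc (Suc j))) / of_int (cont_den (cf_a x) (Suc (Suc (Suc j))))"
    using Q by (simp add: cont_den.simps(3)[of _ "Suc j"] field_simps)
  finally show ?case .
qed

lemma cf_lambda_eq: "cf_lambda x (Suc j) = err_den x j / of_int (cont_den (cf_a x) (Suc (Suc j)))"
  using cont_den_ge_1[of j]
  unfolding cf_lambda_def cf_lambda_reversed_part err_den_def by (simp add: field_simps)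

section \<open>Best approximation and Legendre's theorem\<close>

lemma convergent_errors_alternate:
  "(of_int (cont_den (cf_a x) (Suc (Suc j))) * x - of_int (cont_num (cf_a x) (Suc (Suc j))))
   * (of_int (cont_den (cf_a x) (Suc (Suc (Suc j)))) * x - of_int (cont_num (cf_a x) (Suc (Suc (Suc j)))))
   < 0"
proof -
  have "(-1::real) ^ j * (-1) ^ Suc j = - 1" by (simp flip: power_add)
  then show ?thesis
    unfolding convergent_error using err_den_pos[of j] err_den_pos[of "Suc j"]
    by simp
qed

text \<open>Write (p, q) = u (A_j, B_j) + v (A_(j+1), B_(j+1))
  with integers u, v; the bounds on q force u \<noteq> 0 and u v \<le> 0, so both terms of
  q x - p = u e_j + v e_(j+1) have the same sign.\<close>
lemma best_approximation:
  assumes q0: "0 < q" and q1: "q < cont_den (cf_a x) (Suc (Suc (Suc j)))"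
  shows "\<bar>of_int (cont_den (cf_a x) (Suc (Suc j))) * x - of_int (cont_num (cf_a x) (Suc (Suc j)))\<bar>
         \<le> \<bar>of_int q * x - of_int p\<bar>"
proof -
  define P where "P = cont_num (cf_a x) (Suc (Suc j))"
  define Q where "Q = cont_den (cf_a x) (Suc (Suc j))"
  define P1 where "P1 = cont_num (cf_a x) (Suc (Suc (Suc j)))"
  define Q1 where "Q1 = cont_den (cf_a x) (Suc (Suc (Suc j)))"
  define e where "e = of_int Q * x - of_int P"
  define e1 where "e1 = of_int Q1 * x - of_int P1"
  obtain u v where hp: "p = u * P + v * P1" and hq: "q = u * Q + v * Q1"
    using cont_coordinates[of p "cf_a x" "Suc j" q] unfolding P_def Q_def P1_def Q1_def by blast
  have "u \<noteq> 0 \<and> u * v \<le> 0"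
    by (rule coordinate_signs[OF hq q0 q1[folded Q1_def]])
      (use cont_den_ge_1 in \<open>auto simp: Q_def Q1_def\<close>)
  then have u0: "u \<noteq> 0" and uv: "real_of_int u * of_int v \<le> 0"
    by (simp_all flip: of_int_mult)
  have split: "of_int q * x - of_int p = of_int u * e + of_int v * e1"
    unfolding e_def e1_def hp hq by (simp add: algebra_simps)
  have "e * e1 < 0"
    using convergent_errors_alternate[of j] unfolding e_def e1_def P_def Q_def P1_def Q1_def .
  then have "0 \<le> (of_int u * e) * (of_int v * e1)"
    using uv mult_nonpos_nonpos[of "of_int u * of_int v" "e * e1"] by (simp add: algebra_simps)
  then have "\<bar>of_int u * e\<bar> \<le> \<bar>of_int u * e + of_int v * e1\<bar>"
    by (rule abs_le_abs_add_same_sign)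
  moreover have "\<bar>e\<bar> \<le> \<bar>of_int u * e\<bar>"
    using u0 mult_right_mono[of 1 "\<bar>real_of_int u\<bar>" "\<bar>e\<bar>"] by (simp add: abs_mult)
  ultimately show ?thesis unfolding split e_def P_def Q_def by linarith
qed

lemma convergent_den_bracket:
  assumes q: "q \<ge> 1"
  shows "\<exists>j. cont_den (cf_a x) (Suc (Suc j)) \<le> q \<and> q < cont_den (cf_a x) (Suc (Suc (Suc j)))"
proof -
  define S where "S = {m. q < cont_den (cf_a x) (Suc (Suc m))}"
  define m where "m = (LEAST m. m \<in> S)"
  have "Suc (nat q) \<in> S"
    using cont_den_grow[where b="cf_a x", OF partial_quotients_pos, of "nat q"] q unfolding S_def by simp
  then have mS: "m \<in> S" unfolding m_def by (rule LeastI)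
  have "m \<noteq> 0"
  proof
    assume "m = 0"
    then have "q < cont_den (cf_a x) (Suc (Suc 0))" using mS unfolding S_def by simp
    then show False using q by (simp add: cont_den.simps(3))
  qed
  then obtain j where j: "m = Suc j" using not0_implies_Suc by blast
  then have "j \<notin> S" using not_less_Least[of j "\<lambda>m. m \<in> S"] unfolding m_def by simp
  then show ?thesis using mS unfolding j S_def by (auto simp: not_less)
qed

lemma legendre:
  assumes cop: "coprime p q" and q: "q \<ge> 1"
    and close: "\<bar>of_int q * x - of_int p\<bar> < 1 / (2 * of_int q)"
  shows "\<exists>j. p = cont_num (cf_a x) (Suc (Suc j)) \<and> q = cont_den (cf_a x) (Suc (Suc j))"
proof -
  obtain j where j: "cont_den (cf_a x) (Suc (Suc j)) \<le> q" "q < cont_den (cf_a x) (Suc (Suc (Suc j)))"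
    using convergent_den_bracket[OF q] by blast
  define P where "P = cont_num (cf_a x) (Suc (Suc j))"
  define Q where "Q = cont_den (cf_a x) (Suc (Suc j))"
  have Q: "Q \<ge> 1" unfolding Q_def using cont_den_ge_1 by blast
  have better: "\<bar>of_int Q * x - of_int P\<bar> \<le> \<bar>of_int q * x - of_int p\<bar>"
    unfolding P_def Q_def using best_approximation[OF _ j(2)] q by simp
  show ?thesis
  proof (rule ccontr)
    assume not_conv: "\<not> ?thesis"
    have "p * Q - q * P \<noteq> 0"
    proof
      assume "p * Q - q * P = 0"
      then have eq: "p * Q = P * q" by (simp add: mult.commute)
      have "q = Q"
        by (rule reduced_denominator_unique[OF cop _ _ _ eq])
          (use q Q in \<open>auto simp: P_def Q_def coprime_cont\<close>)
      moreover from this have "p = P" using eq Q by simp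
      ultimately show False using not_conv unfolding P_def Q_def by blast
    qed
    then have "1 \<le> \<bar>real_of_int (p * Q - q * P)\<bar>" by linarith
    also have "real_of_int (p * Q - q * P)
        = of_int Q * (of_int p - of_int q * x) + of_int q * (of_int Q * x - of_int P)"
      by (simp add: algebra_simps)
    also have "\<bar>\<dots>\<bar> \<le> of_int Q * \<bar>of_int q * x - of_int p\<bar> + of_int q * \<bar>of_int Q * x - of_int P\<bar>"
      using Q q by (simp add: abs_triangle_ineq[THEN order_trans] abs_mult abs_minus_commute)
    also have "\<dots> < of_int Q * (1 / (2 * of_int q)) + of_int q * (1 / (2 * of_int q))"
      using Q q better close
      by (intro add_less_le_mono mult_strict_left_mono mult_left_mono) auto
    also have "\<dots> \<le> 1"
      using j(1) q unfolding Q_def by (simp add: field_simps)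
    finally show False by simp
  qed
qed

lemma upper_approximation_is_odd_convergent:
  assumes cop: "coprime p q" and q: "q \<ge> 1"
    and above: "0 < of_int p - of_int q * x" and close: "of_int p - of_int q * x < 1 / (2 * of_int q)"
  shows "\<exists>j. odd j \<and> cf_B x j = q \<and>
             cf_lambda x (Suc j) = 1 / (of_int q * (of_int p - of_int q * x))"
proof -
  obtain j where p: "p = cont_num (cf_a x) (Suc (Suc j))" and q_eq: "q = cont_den (cf_a x) (Suc (Suc j))"
    using legendre[OF cop q] above close by auto
  have err: "of_int q * x - of_int p = (-1) ^ j / err_den x j"
    unfolding p q_eq by (rule convergent_error)
  then have "(-1::real) ^ j / err_den x j < 0" using above by linarith
  then have "(-1::real) ^ j < 0" using err_den_pos[of j] by (simp add: divide_less_0_iff)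
  then have odd: "odd j" by (metis neg_one_even_power not_less zero_le_one)
  then have "of_int p - of_int q * x = 1 / err_den x j" using err by simp
  then have "cf_lambda x (Suc j) = 1 / (of_int q * (of_int p - of_int q * x))"
    using err_den_pos[of j] unfolding cf_lambda_eq q_eq by simp
  then show ?thesis using odd cf_B_eq_cont_den[of j] q_eq by blast
qed

end

section \<open>Bounds for 1/(e^x - 1)\<close>

lemma exp_ge_taylor6:
  fixes x :: real assumes x: "x \<ge> 0"
  shows "exp x \<ge> 1 + x + x^2/2 + x^3/6 + x^4/24 + x^5/120 + x^6/720"
proof -
  obtain t where t: "exp x = (\<Sum>m<7. (x ^ m) / fact m) + (exp t / fact 7) * x ^ 7"
    using Maclaurin_exp_le[of x 7] by blast
  have "(exp t / fact 7) * x ^ 7 \<ge> 0" using x by simp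
  moreover have "(\<Sum>m<7. (x ^ m) / fact m) = 1 + x + x^2/2 + x^3/6 + x^4/24 + x^5/120 + x^6/720"
    by (simp add: eval_nat_numeral fact_numeral)
  ultimately show ?thesis using t by linarith
qed

lemma exp_minus_ge_taylor5:
  fixes x :: real
  shows "exp (-x) \<ge> 1 - x + x^2/2 - x^3/6 + x^4/24 - x^5/120"
proof -
  obtain t where t: "exp (-x) = (\<Sum>m<6. ((-x) ^ m) / fact m) + (exp t / fact 6) * (-x) ^ 6"
    using Maclaurin_exp_le[of "-x" 6] by blast
  have "(exp t / fact 6) * (-x) ^ 6 \<ge> 0" by simp
  moreover have "(\<Sum>m<6. ((-x) ^ m) / fact m) = 1 - x + x^2/2 - x^3/6 + x^4/24 - x^5/120"
    by (simp add: eval_nat_numeral fact_numeral)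
  ultimately show ?thesis using t by linarith
qed

text \<open>Two polynomial-exponential inequalities behind the estimate of 1/(e^x - 1); both
  compare e^x with the Taylor polynomials above, the gap being an explicit polynomial with
  positive coefficients.\<close>
lemma exp_times_quadratic_gt:
  fixes x :: real assumes x: "x > 0"
  shows "12 * x < (exp x - 1) * (x^2 - 6*x + 12)"
proof -
  define q where "q = x^2 - 6*x + 12"
  have q: "q > 0"
  proof -
    have "q = (x - 3)^2 + 3" unfolding q_def by (simp add: power2_eq_square algebra_simps)
    then show ?thesis by (simp add: add_nonneg_pos)
  qed
  define S where "S = 720 + 720*x + 360*x^2 + 120*x^3 + 30*x^4 + 6*x^5 + x^6"
  have E: "exp x \<ge> S / 720" using exp_ge_taylor6[OF less_imp_le[OF x]] unfolding S_def by (simp add: field_simps)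
  have "(S - 720) * q - 8640 * x = 12 * x^5 + 6 * x^6 + x^8"
    unfolding S_def q_def by algebra
  moreover have "12 * x^5 + 6 * x^6 + x^8 > 0" using x by (simp add: add_pos_nonneg)
  ultimately have "12 * x < (S / 720 - 1) * q" by (simp add: field_simps)
  also have "\<dots> \<le> (exp x - 1) * q" using E q by (intro mult_right_mono) auto
  finally show ?thesis unfolding q_def .
qed

lemma exp_times_linear_lt:
  fixes x :: real assumes x: "x > 0"
  shows "(2 - x) * exp x < 2 + x"
proof (cases "x < 2")
  case False
  then have "(2 - x) * exp x \<le> 0" by (intro mult_nonpos_nonneg) auto
  then show ?thesis using x by simp
next
  case True
  define T where "T = 120 - 120*x + 60*x^2 - 20*x^3 + 5*x^4 - x^5"
  have E: "exp (-x) \<ge> T / 120" using exp_minus_ge_taylor5[of x] unfolding T_def by (simp add: field_simps)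
  have "x^2 * (3 - x) > 0" using x True by simp
  then have "20 - 10 * x + x^2 * (3 - x) > 0" using True by linarith
  then have "x^3 * (20 - 10 * x + x^2 * (3 - x)) > 0" using x by simp
  moreover have "(2 + x) * T - 120 * (2 - x) = x^3 * (20 - 10 * x + x^2 * (3 - x))"
    unfolding T_def by algebra
  ultimately have "2 - x < (2 + x) * (T / 120)" by (simp add: field_simps)
  also have "\<dots> \<le> (2 + x) * exp (-x)" using E x by (intro mult_left_mono) auto
  finally have "(2 - x) * exp x < (2 + x) * exp (-x) * exp x"
    by (intro mult_strict_right_mono) auto
  also have "(2 + x) * exp (-x) * exp x = 2 + x" by (simp add: mult.assoc flip: exp_add)
  finally show ?thesis .
qed

text \<open>The first terms of the Laurent expansion 1/(e^x - 1) = 1/x - 1/2 + x/12 - ...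
  give a two-sided estimate for positive x.\<close>
lemma recip_exp_minus_one_bounds:
  fixes x :: real assumes x: "x > 0"
  shows "1 / x - 1/2 < 1 / (exp x - 1)" and "1 / (exp x - 1) < 1 / x - 1/2 + x / 12"
proof -
  have ex: "exp x - 1 > 0" using x by simp
  have "1 / x - 1/2 = (2 - x) / (2 * x)" using x by (simp add: field_simps)
  also have "\<dots> < 1 / (exp x - 1)"
    using exp_times_linear_lt[OF x] ex x by (simp add: field_simps)
  finally show "1 / x - 1/2 < 1 / (exp x - 1)" .
  have "1 / (exp x - 1) < (x^2 - 6*x + 12) / (12 * x)"
    using exp_times_quadratic_gt[OF x] ex x by (simp add: field_simps)
  also have "\<dots> = 1 / x - 1/2 + x / 12"
    using x by (simp add: field_simps power2_eq_square)
  finally show "1 / (exp x - 1) < 1 / x - 1/2 + x / 12" .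
qed

text \<open>If n lies in A_theta, the two floors differ; since the left one is the larger,
  an integer f lies strictly above n/L - 1/2 and at most 1/(theta^(1/n) - 1), so the odd
  integer p = 2f + 1 approximates n alpha from above to within L/(6 n).\<close>
lemma A_set_upper_approximation:
  fixes \<theta> :: real
  assumes \<theta>: "1 < \<theta>" and n: "n \<in> A_set \<theta>"
  shows "\<exists>p::int. 0 < p - real n * (2 / ln \<theta>) \<and>
                   p - real n * (2 / ln \<theta>) < ln \<theta> / (6 * real n)"
proof -
  define L where "L = ln \<theta>"
  have L: "L > 0" unfolding L_def using \<theta> by simp
  have n1: "n \<ge> 1" and floors_differ: "M' \<theta> n \<noteq> \<lfloor>real n / L - 1/2\<rfloor>"
    using n unfolding A_set_def L_def by auto
  define t where "t = L / real n"
  have t: "t > 0" unfolding t_def using L n1 by simp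
  have "\<theta> powr (1 / real n) = exp t"
    unfolding t_def L_def using \<theta> by (simp add: powr_def)
  then have M': "M' \<theta> n = \<lfloor>1 / (exp t - 1)\<rfloor>" unfolding M'_def by simp
  have inv_t: "1 / t = real n / L" unfolding t_def by simp
  define f where "f = \<lfloor>1 / (exp t - 1)\<rfloor>"
  have "\<lfloor>real n / L - 1/2\<rfloor> \<le> f"
    unfolding f_def using recip_exp_minus_one_bounds(1)[OF t] inv_t by (intro floor_mono) simp
  then have "\<lfloor>real n / L - 1/2\<rfloor> + 1 \<le> f" using floors_differ unfolding M' f_def by simp
  then have f_lower: "real n / L - 1/2 < f" by linarith
  have f_upper: "f < real n / L - 1/2 + t / 12"
    using recip_exp_minus_one_bounds(2)[OF t] inv_t unfolding f_def by linarith
  have "real n * (2 / L) = 2 * (real n / L)" and "2 * (t / 12) = L / (6 * real n)"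
    unfolding t_def by simp_all
  then have "0 < (2 * f + 1) - real n * (2 / L)" "(2 * f + 1) - real n * (2 / L) < L / (6 * real n)"
    using f_lower f_upper by linarith+
  then show ?thesis unfolding L_def by (intro exI[of _ "2 * f + 1"]) simp
qed

lemma cancel_gcd:
  fixes p :: int and n :: nat
  assumes n: "n \<ge> 1"
  shows "\<exists>g p' q'. g > 0 \<and> q' \<ge> 1 \<and> coprime p' q' \<and> p = g * p' \<and> int n = g * q'"
proof -
  define g where "g = gcd p (int n)"
  have g: "g > 0" unfolding g_def using n by simp
  have p_eq: "p = g * (p div g)" and n_eq: "int n = g * (int n div g)"
    unfolding g_def by simp_all
  have "coprime (p div g) (int n div g)" unfolding g_def
    by (rule div_gcd_coprime) (use n in simp)
  moreover have "int n div g \<ge> 1"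
  proof (rule ccontr)
    assume "\<not> int n div g \<ge> 1"
    then have "g * (int n div g) \<le> 0" using g by (intro mult_nonneg_nonpos) auto
    then show False using n_eq n by simp
  qed
  ultimately show ?thesis using g p_eq n_eq by blast
qed

lemma odd_convergent_from_upper_approximation:
  fixes x \<epsilon> :: real and n :: nat and p :: int
  assumes x: "x \<notin> \<rat>" and \<epsilon>: "0 < \<epsilon>" "\<epsilon> \<le> 3" and n: "n \<ge> 1"
    and above: "0 < p - real n * x" and close: "p - real n * x < \<epsilon> / (6 * real n)"
  shows "\<exists>c k :: nat. c > 0 \<and> k > 0 \<and> int n = int c * cf_B x (2 * k - 1) \<and>
           cf_lambda x (2 * k) > 6 * (real c)^2 / \<epsilon>"
proof -
  obtain g p' q' where g: "g > 0" and q': "q' \<ge> 1" and cop: "coprime p' q'"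
    and p_eq: "p = g * p'" and n_eq: "int n = g * q'"
    using cancel_gcd[OF n] by blast
  have g1: "real_of_int g \<ge> 1" and q'1: "real_of_int q' \<ge> 1" using g q' by simp_all
  define \<delta> where "\<delta> = of_int p' - of_int q' * x"
  have n_real: "real n = of_int g * of_int q'" using n_eq by (metis of_int_mult of_int_of_nat_eq)
  have scaled: "p - real n * x = of_int g * \<delta>"
    unfolding \<delta>_def n_real p_eq by (simp add: algebra_simps)
  have \<delta>0: "\<delta> > 0" using above g1 unfolding scaled by (simp add: zero_less_mult_iff)
  have "of_int g * \<delta> < \<epsilon> / (6 * real n)" using close unfolding scaled .
  then have \<delta>_small: "of_int q' * \<delta> < \<epsilon> / (6 * of_int g ^ 2)"
    using g1 q'1 unfolding n_real by (simp add: field_simps power2_eq_square)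
  have "\<epsilon> / (6 * of_int g ^ 2) \<le> 1 / 2"
  proof -
    have "1 \<le> real_of_int g ^ 2" using g1 by simp
    then have "\<epsilon> \<le> 1 / 2 * (6 * real_of_int g ^ 2)" using \<epsilon> by linarith
    then show ?thesis using g by (subst pos_divide_le_eq) auto
  qed
  then have "\<delta> < 1 / (2 * of_int q')" using \<delta>_small q'1 by (simp add: field_simps)
  then obtain j where j: "odd j" "cf_B x j = q'" "cf_lambda x (Suc j) = 1 / (of_int q' * \<delta>)"
    using upper_approximation_is_odd_convergent[OF x cop q'] \<delta>0 unfolding \<delta>_def by blast
  have "6 * (of_int g)^2 / \<epsilon> < 1 / (of_int q' * \<delta>)"
    using \<delta>_small \<delta>0 q'1 g1 \<epsilon> by (simp add: field_simps)
  moreover have "int (nat g) = g" "real (nat g) = of_int g" using g by simp_all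
  moreover have "2 * (Suc j div 2) - 1 = j" "2 * (Suc j div 2) = Suc j" "Suc j div 2 > 0"
    using j(1) by auto
  ultimately show ?thesis using j g n_eq
    by (intro exI[of _ "nat g"] exI[of _ "Suc j div 2"]) simp
qed

theorem mainTheorem12:
  fixes \<theta> :: real and n :: nat
  assumes "1 < \<theta>" and "\<theta> < exp 3"
    and "ln \<theta> \<notin> \<rat>"
    and "n \<in> A_set \<theta>"
  shows "\<exists>c k :: nat. c > 0 \<and> k > 0 \<and>
           int n = int c * cf_B (2 / ln \<theta>) (2 * k - 1) \<and>
           cf_lambda (2 / ln \<theta>) (2 * k) > 6 * (real c)^2 / ln \<theta>"
proof -
  have L0: "0 < ln \<theta>" using assms(1) by simp
  have L3: "ln \<theta> \<le> 3"
    using assms(1,2) ln_less_cancel_iff[of \<theta> "exp 3"] by simp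
  have "2 / ln \<theta> \<notin> \<rat>"
  proof
    assume "2 / ln \<theta> \<in> \<rat>"
    with Rats_number_of have "2 / (2 / ln \<theta>) \<in> \<rat>" by (rule Rats_divide)
    moreover have "2 / (2 / ln \<theta>) = ln \<theta>" using L0 by simp
    ultimately show False using assms(3) by simp
  qed
  moreover have "n \<ge> 1" using assms(4) unfolding A_set_def by simp
  moreover obtain p :: int where "0 < p - real n * (2 / ln \<theta>)"
      "p - real n * (2 / ln \<theta>) < ln \<theta> / (6 * real n)"
    using A_set_upper_approximation[OF assms(1,4)] by blast
  ultimately show ?thesis
    using odd_convergent_from_upper_approximation[OF _ L0 L3] by blast
qed

end
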